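(* Let $A \in \mathbb{Q}^{m\times n}$ and let $k \le n$ be a positive integer. If $\operatorname{spark}(A) > k$, then there exists a constant $\varepsilon > 0$ with encoding length polynomially bounded by that of $A$ such that $\|Ax\|_2^2 \ge \varepsilon\|x\|_2^2$ for all $x \in \mathbb{R}^n$ with $\|x\|_0 \le k$.
   Context: $\operatorname{spark}(A) := \min\{\|x\|_0 : Ax = 0,\ x\ne 0\}$, where $\|x\|_0$ is the number of nonzero entries of $x$; $\|\cdot\|_2$ is the Euclidean norm. Encoding length refers to binary encoding length of rational numbers. *)

theory Defs
  imports Complex_Main "HOL-Library.Extended_Nat"
begin

text \<open>Matrices A in Q^(m x n) are represented as functions nat => nat => rat,
  with only the entries A i j for i < m, j < n being relevant.
  Vectors in R^n are functions nat => real, with entries x j for j < n.\<close>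

definition mat_vec :: "nat \<Rightarrow> nat \<Rightarrow> (nat \<Rightarrow> nat \<Rightarrow> rat) \<Rightarrow> (nat \<Rightarrow> real) \<Rightarrow> (nat \<Rightarrow> real)" where
  "mat_vec m n A x = (\<lambda>i. if i < m then (\<Sum>j<n. real_of_rat (A i j) * x j) else 0)"

definition sq_norm2 :: "nat \<Rightarrow> (nat \<Rightarrow> real) \<Rightarrow> real" where
  "sq_norm2 n x = (\<Sum>j<n. (x j)^2)"

definition l0 :: "nat \<Rightarrow> (nat \<Rightarrow> real) \<Rightarrow> nat" where
  "l0 n x = card {j. j < n \<and> x j \<noteq> 0}"

definition in_Rn :: "nat \<Rightarrow> (nat \<Rightarrow> real) \<Rightarrow> bool" where
  "in_Rn n x \<longleftrightarrow> (\<forall>j\<ge>n. x j = 0)"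

text \<open>spark(A) = min ||x||_0 over nonzero x in R^n with Ax = 0; infinity if no such x.\<close>
definition spark :: "nat \<Rightarrow> nat \<Rightarrow> (nat \<Rightarrow> nat \<Rightarrow> rat) \<Rightarrow> enat" where
  "spark m n A = (INF x \<in> {x. in_Rn n x \<and> x \<noteq> (\<lambda>_. 0) \<and> mat_vec m n A x = (\<lambda>_. 0)}.
      enat (l0 n x))"

text \<open>Binary encoding lengths (Schrijver's convention).\<close>
definition int_size :: "int \<Rightarrow> nat" where
  "int_size z = 1 + nat \<lceil>log 2 (real_of_int (\<bar>z\<bar> + 1))\<rceil>"

definition rat_size :: "rat \<Rightarrow> nat" where
  "rat_size r = (case quotient_of r of (p, q) \<Rightarrow> int_size p + nat \<lceil>log 2 (real_of_int (q + 1))\<rceil>)"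

definition mat_size :: "nat \<Rightarrow> nat \<Rightarrow> (nat \<Rightarrow> nat \<Rightarrow> rat) \<Rightarrow> nat" where
  "mat_size m n A = m * n + (\<Sum>i<m. \<Sum>j<n. rat_size (A i j))"

end

theory Submission
  imports Defs "Jordan_Normal_Form.Determinant" "HOL-Analysis.Convex"
begin

text \<open>Clearing denominators turns \<open>A\<close> into an integer matrix \<open>B = L A\<close>. For a vector \<open>x\<close>
  supported on a set \<open>S\<close> with \<open>|S| \<le> k < spark A\<close>, the columns of \<open>B\<close> indexed by \<open>S\<close> are
  independent, so their Gram matrix (padded with the identity outside \<open>S\<close>) is a nonsingular integer
  matrix and has determinant at least \<open>1\<close> in absolute value. Cramer's rule then recovers \<open>x\<close> from
  \<open>B x = L A x\<close> with coefficients bounded by cofactors, whose size is controlled by a crude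
  Leibniz bound. All constants are powers of two with exponent quadratic in the encoding length of \<open>A\<close>,
  so \<open>\<epsilon>\<close> can be taken to be the inverse of such a power.\<close>

lemma le_two_power_ceiling_log:
  fixes x :: real
  assumes "x \<ge> 1"
  shows "x \<le> 2 ^ nat \<lceil>log 2 x\<rceil>"
proof -
  have "x = 2 powr log 2 x" using assms by simp
  also have "\<dots> \<le> 2 powr real (nat \<lceil>log 2 x\<rceil>)"
    using assms by (intro powr_mono) (auto simp: le_nat_iff)
  also have "\<dots> = 2 ^ nat \<lceil>log 2 x\<rceil>" by (simp add: powr_realpow)
  finally show ?thesis .
qed

lemma quotient_of_le_two_power_rat_size:
  assumes "quotient_of r = (p, q)"
  shows "real_of_int \<bar>p\<bar> \<le> 2 ^ rat_size r" and "real_of_int q \<le> 2 ^ rat_size r"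
proof -
  define e where "e = nat \<lceil>log 2 (real_of_int (\<bar>p\<bar> + 1))\<rceil>"
  define f where "f = nat \<lceil>log 2 (real_of_int (q + 1))\<rceil>"
  have q: "q > 0" using quotient_of_denom_pos[OF assms] .
  have p_le: "real_of_int \<bar>p\<bar> + 1 \<le> 2 ^ e"
    using le_two_power_ceiling_log[of "real_of_int (\<bar>p\<bar> + 1)"] by (simp add: e_def)
  have q_le: "real_of_int q + 1 \<le> 2 ^ f"
    using le_two_power_ceiling_log[of "real_of_int (q + 1)"] q by (simp add: f_def)
  have size: "(2::real) ^ rat_size r = 2 * 2 ^ e * 2 ^ f"
    unfolding rat_size_def int_size_def assms e_def f_def by (simp add: power_add)
  have "(1::real) \<le> 2 ^ e" "(1::real) \<le> 2 ^ f" by simp_all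
  then show "real_of_int \<bar>p\<bar> \<le> 2 ^ rat_size r" "real_of_int q \<le> 2 ^ rat_size r"
    unfolding size using p_le q_le by (smt (verit) mult_le_cancel_right1 mult_le_cancel_left1)+
qed

lemma rat_size_inverse_two_power: "rat_size (1 / of_int (2 ^ N)) \<le> N + 3"
proof -
  have "1 / (of_int (2 ^ N) :: rat) = Rat.Fract 1 (2 ^ N)"
    by (simp add: Fract_of_int_quotient)
  then have "quotient_of (1 / of_int (2 ^ N) :: rat) = (1, 2 ^ N)"
    by (simp add: quotient_of_Fract normalize_def)
  then have size: "rat_size (1 / of_int (2 ^ N)) = 2 + nat \<lceil>log 2 (real_of_int (2 ^ N + 1))\<rceil>"
    unfolding rat_size_def by (simp add: int_size_def)
  have "log 2 (real_of_int (2 ^ N + 1)) \<le> log 2 (2 ^ (N + 1))"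
    by (subst log_le_cancel_iff) (auto intro: add_pos_pos)
  also have "\<dots> = N + 1" by (subst log_nat_power) auto
  finally have "nat \<lceil>log 2 (real_of_int (2 ^ N + 1))\<rceil> \<le> N + 1"
    by (simp add: ceiling_le_iff nat_le_iff)
  then show ?thesis unfolding size by simp
qed

lemma rat_size_le_mat_size:
  assumes "i < m" "j < n"
  shows "rat_size (A i j) \<le> mat_size m n A"
proof -
  have "rat_size (A i j) \<le> (\<Sum>j<n. rat_size (A i j))"
    using assms by (intro member_le_sum) auto
  also have "\<dots> \<le> (\<Sum>i<m. \<Sum>j<n. rat_size (A i j))"
    using assms by (intro member_le_sum[where f = "\<lambda>i. \<Sum>j<n. rat_size (A i j)"]) auto
  finally show ?thesis unfolding mat_size_def by simp
qed

lemma common_denominator_mat: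
  fixes A :: "nat \<Rightarrow> nat \<Rightarrow> rat"
  obtains L :: int and B :: "nat \<Rightarrow> nat \<Rightarrow> int"
  where "L \<ge> 1" "real_of_int L \<le> 2 ^ mat_size m n A"
    "\<And>i j. i < m \<Longrightarrow> j < n \<Longrightarrow> real_of_rat (A i j) * real_of_int L = real_of_int (B i j)"
    "\<And>i j. i < m \<Longrightarrow> j < n \<Longrightarrow> real_of_int \<bar>B i j\<bar> \<le> 4 ^ mat_size m n A"
proof -
  define T where "T = mat_size m n A"
  define P where "P i j = fst (quotient_of (A i j))" for i j
  define Q where "Q i j = snd (quotient_of (A i j))" for i j
  have PQ: "quotient_of (A i j) = (P i j, Q i j)" for i j by (simp add: P_def Q_def)
  have Q_pos: "Q i j > 0" for i j using quotient_of_denom_pos[OF PQ] .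
  have A_eq: "real_of_rat (A i j) = real_of_int (P i j) / real_of_int (Q i j)" for i j
    using quotient_of_div[OF PQ[of i j]] by (simp add: of_rat_divide)
  have size_le: "(2::real) ^ rat_size (A i j) \<le> 2 ^ T" if "i < m" "j < n" for i j
    using rat_size_le_mat_size[OF that] unfolding T_def by (intro power_increasing) auto
  define L where "L = (\<Prod>i<m. \<Prod>j<n. Q i j)"
  have L_ge: "L \<ge> 1"
    unfolding L_def by (intro prod_ge_1) (use Q_pos in \<open>auto simp: int_one_le_iff_zero_less\<close>)
  have "real_of_int L = (\<Prod>i<m. \<Prod>j<n. real_of_int (Q i j))" unfolding L_def by simp
  also have "\<dots> \<le> (\<Prod>i<m. \<Prod>j<n. 2 ^ rat_size (A i j))"
    using Q_pos quotient_of_le_two_power_rat_size(2)[OF PQ]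
    by (intro prod_mono conjI prod_nonneg) (auto intro: less_imp_le)
  also have "\<dots> = 2 ^ (\<Sum>i<m. \<Sum>j<n. rat_size (A i j))" by (simp add: power_sum)
  also have "\<dots> \<le> 2 ^ T" unfolding T_def mat_size_def by (intro power_increasing) auto
  finally have L_le: "real_of_int L \<le> 2 ^ T" .
  have Q_dvd: "Q i j dvd L" if "i < m" "j < n" for i j
  proof -
    have "Q i j dvd (\<Prod>j<n. Q i j)" using that by (intro dvd_prodI) auto
    also have "\<dots> dvd L" unfolding L_def using that by (intro dvd_prodI) auto
    finally show ?thesis .
  qed
  define B where "B i j = P i j * (L div Q i j)" for i j
  have B_eq: "real_of_rat (A i j) * real_of_int L = real_of_int (B i j)" if "i < m" "j < n" for i j
    using Q_dvd[OF that] by (simp add: B_def A_eq real_of_int_div)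
  have B_le: "real_of_int \<bar>B i j\<bar> \<le> 4 ^ T" if "i < m" "j < n" for i j
  proof -
    have "real_of_int \<bar>B i j\<bar> = real_of_int \<bar>P i j\<bar> / real_of_int (Q i j) * real_of_int L"
      unfolding of_int_abs B_eq[OF that, symmetric] A_eq using L_ge Q_pos[of i j]
      by (simp add: abs_mult abs_divide)
    also have "\<dots> \<le> real_of_int \<bar>P i j\<bar> * real_of_int L"
      using Q_pos[of i j] L_ge by (intro mult_right_mono) (auto simp: divide_le_eq mult_le_cancel_left1)
    also have "\<dots> \<le> 2 ^ T * 2 ^ T"
      using order_trans[OF quotient_of_le_two_power_rat_size(1)[OF PQ] size_le[OF that]] L_le L_ge
      by (intro mult_mono) auto
    also have "\<dots> = 4 ^ T" by (simp add: power_mult_distrib[symmetric])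
    finally show ?thesis .
  qed
  show ?thesis using that[OF L_ge L_le[unfolded T_def] B_eq B_le[unfolded T_def]] by blast
qed

lemma abs_det_le_fact_mult_power:
  fixes N :: "'a::linordered_idom mat"
  assumes "N \<in> carrier_mat d d" and "g \<ge> 0"
    and "\<And>i j. i < d \<Longrightarrow> j < d \<Longrightarrow> \<bar>N $$ (i, j)\<bar> \<le> g"
  shows "\<bar>det N\<bar> \<le> fact d * g ^ d"
proof -
  let ?P = "{p. p permutes {0..<d}}"
  have "\<bar>det N\<bar> = \<bar>\<Sum>p\<in>?P. signof p * (\<Prod>i = 0..<d. N $$ (i, p i))\<bar>"
    using det_def'[OF assms(1)] by simp
  also have "\<dots> \<le> (\<Sum>p\<in>?P. \<bar>signof p * (\<Prod>i = 0..<d. N $$ (i, p i))\<bar>)"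
    by (rule sum_abs)
  also have "\<dots> \<le> (\<Sum>p\<in>?P. g ^ d)"
  proof (rule sum_mono)
    fix p assume p: "p \<in> ?P"
    have "\<bar>signof p * (\<Prod>i = 0..<d. N $$ (i, p i))\<bar> = (\<Prod>i = 0..<d. \<bar>N $$ (i, p i)\<bar>)"
      by (simp add: abs_mult abs_prod sign_def)
    also have "\<dots> \<le> (\<Prod>i = 0..<d. g)"
    proof (rule prod_mono)
      fix i assume i: "i \<in> {0..<d}"
      then have "p i \<in> {0..<d}" using p permutes_in_image by fastforce
      then show "0 \<le> \<bar>N $$ (i, p i)\<bar> \<and> \<bar>N $$ (i, p i)\<bar> \<le> g" using assms(3) i by auto
    qed
    finally show "\<bar>signof p * (\<Prod>i = 0..<d. N $$ (i, p i))\<bar> \<le> g ^ d" by simp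
  qed
  also have "\<dots> = fact d * g ^ d"
    using card_permutations[of "{0..<d}" d] by simp
  finally show ?thesis .
qed

text \<open>Cramer's rule: \<open>det G \<cdot> v = adj G \<cdot> (G v)\<close>, with cofactors bounded by the Leibniz formula.\<close>

lemma abs_vec_index_le_mult_mat_vec:
  fixes G :: "real mat"
  assumes G: "G \<in> carrier_mat n n" and det: "\<bar>det G\<bar> \<ge> 1" and g: "g \<ge> 0"
    and G_le: "\<And>i j. i < n \<Longrightarrow> j < n \<Longrightarrow> \<bar>G $$ (i, j)\<bar> \<le> g"
    and v: "v \<in> carrier_vec n" and j: "j < n"
  shows "\<bar>v $ j\<bar> \<le> fact (n - 1) * g ^ (n - 1) * (\<Sum>a<n. \<bar>(G *\<^sub>v v) $ a\<bar>)"
proof -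
  let ?\<alpha> = "fact (n - 1) * g ^ (n - 1) :: real"
  have adj: "adj_mat G * G = det G \<cdot>\<^sub>m 1\<^sub>m n" "adj_mat G \<in> carrier_mat n n"
    using adj_mat[OF G] by auto
  have "det G * v $ j = det G * ((1\<^sub>m n *\<^sub>v v) $ j)"
    using v by simp
  also have "\<dots> = ((adj_mat G * G) *\<^sub>v v) $ j"
    using adj(1) j v by simp
  also have "\<dots> = (adj_mat G *\<^sub>v (G *\<^sub>v v)) $ j"
    using adj(2) G v by (simp add: assoc_mult_mat_vec)
  also have "\<dots> = (\<Sum>a<n. adj_mat G $$ (j, a) * (G *\<^sub>v v) $ a)"
    using adj(2) j G by (auto simp: scalar_prod_def row_def lessThan_atLeast0)
  finally have cramer: "det G * v $ j = (\<Sum>a<n. adj_mat G $$ (j, a) * (G *\<^sub>v v) $ a)" .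
  have cofactor_le: "\<bar>adj_mat G $$ (j, a)\<bar> \<le> ?\<alpha>" if a: "a < n" for a
  proof -
    have "\<bar>adj_mat G $$ (j, a)\<bar> = \<bar>det (mat_delete G a j)\<bar>"
      using G j a by (simp add: adj_mat_def cofactor_def abs_mult)
    also have "\<dots> \<le> ?\<alpha>"
      using G by (intro abs_det_le_fact_mult_power[OF mat_delete_carrier[OF G] g])
        (auto simp: mat_delete_def intro!: G_le)
    finally show ?thesis .
  qed
  have "\<bar>v $ j\<bar> \<le> \<bar>det G * v $ j\<bar>"
    using det by (simp add: abs_mult mult_le_cancel_right1)
  also have "\<dots> \<le> (\<Sum>a<n. \<bar>adj_mat G $$ (j, a)\<bar> * \<bar>(G *\<^sub>v v) $ a\<bar>)"
    unfolding cramer abs_mult[symmetric] by (rule sum_abs)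
  also have "\<dots> \<le> (\<Sum>a<n. ?\<alpha> * \<bar>(G *\<^sub>v v) $ a\<bar>)"
    using cofactor_le by (intro sum_mono mult_right_mono) auto
  finally show ?thesis by (simp add: sum_distrib_left)
qed

text \<open>The Gram matrix \<open>B\<^sub>S\<^sup>T B\<^sub>S\<close> of the columns of \<open>B\<close> indexed by \<open>S\<close>, extended by the identity on
  the remaining indices so that it is \<open>n \<times> n\<close> whatever \<open>S\<close> is.\<close>

definition padded_gram :: "nat set \<Rightarrow> nat \<Rightarrow> nat \<Rightarrow> (nat \<Rightarrow> nat \<Rightarrow> 'a::comm_ring_1) \<Rightarrow> 'a mat" where
  "padded_gram S m n B = mat n n (\<lambda>(a, b).
     if a \<in> S \<and> b \<in> S then \<Sum>r<m. B r a * B r b else if a = b then 1 else 0)"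

lemma padded_gram_carrier [simp]: "padded_gram S m n B \<in> carrier_mat n n"
  by (simp add: padded_gram_def)

lemma dim_padded_gram [simp]:
  "dim_row (padded_gram S m n B) = n" "dim_col (padded_gram S m n B) = n"
  by (simp_all add: padded_gram_def)

lemma map_mat_of_int_padded_gram:
  "map_mat of_int (padded_gram S m n B) = padded_gram S m n (\<lambda>r j. of_int (B r j))"
  by (rule eq_matI) (auto simp: padded_gram_def)

lemma padded_gram_mult_vec_index:
  "a < n \<Longrightarrow> (padded_gram S m n B *\<^sub>v vec n x) $ a = (\<Sum>b<n. padded_gram S m n B $$ (a, b) * x b)"
  by (simp add: scalar_prod_def lessThan_atLeast0)

lemma padded_gram_mult_vec_outside:
  assumes "a < n" "a \<notin> S"
  shows "(padded_gram S m n B *\<^sub>v vec n x) $ a = x a"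
proof -
  have "(\<Sum>b<n. padded_gram S m n B $$ (a, b) * x b) = (\<Sum>b<n. if a = b then x b else 0)"
    using assms by (intro sum.cong) (auto simp: padded_gram_def)
  then show ?thesis using assms by (simp only: padded_gram_mult_vec_index) simp
qed

lemma padded_gram_mult_vec_inside:
  fixes B :: "nat \<Rightarrow> nat \<Rightarrow> 'a::comm_ring_1"
  assumes "a < n" "a \<in> S" and supp: "\<And>b. b < n \<Longrightarrow> b \<notin> S \<Longrightarrow> x b = 0"
  shows "(padded_gram S m n B *\<^sub>v vec n x) $ a = (\<Sum>r<m. B r a * (\<Sum>b<n. B r b * x b))"
proof -
  have "(\<Sum>b<n. padded_gram S m n B $$ (a, b) * x b) = (\<Sum>b<n. (\<Sum>r<m. B r a * B r b) * x b)"
    using assms by (intro sum.cong) (auto simp: padded_gram_def)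
  also have "\<dots> = (\<Sum>r<m. B r a * (\<Sum>b<n. B r b * x b))"
    by (simp add: sum_distrib_left sum_distrib_right mult.assoc sum.swap[of _ "{..<n}"])
  finally show ?thesis unfolding padded_gram_mult_vec_index[OF assms(1)] .
qed

lemma abs_padded_gram_le:
  fixes B :: "nat \<Rightarrow> nat \<Rightarrow> 'a::linordered_idom"
  assumes B_le: "\<And>r j. r < m \<Longrightarrow> j < n \<Longrightarrow> \<bar>B r j\<bar> \<le> \<beta>"
    and one_le: "1 \<le> of_nat m * \<beta>\<^sup>2" and "a < n" "b < n"
  shows "\<bar>padded_gram S m n B $$ (a, b)\<bar> \<le> of_nat m * \<beta>\<^sup>2"
proof (cases "a \<in> S \<and> b \<in> S")
  case True
  have "\<bar>padded_gram S m n B $$ (a, b)\<bar> \<le> (\<Sum>r<m. \<bar>B r a\<bar> * \<bar>B r b\<bar>)"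
    using True assms(3,4) by (simp add: padded_gram_def abs_mult[symmetric] sum_abs)
  also have "\<dots> \<le> (\<Sum>r<m. \<beta> * \<beta>)"
    using assms(3,4) by (intro sum_mono mult_mono B_le) (auto intro: order_trans[OF abs_ge_zero B_le])
  finally show ?thesis by (simp add: power2_eq_square)
qed (use assms in \<open>auto simp: padded_gram_def\<close>)

lemma padded_gram_kernel:
  fixes B :: "nat \<Rightarrow> nat \<Rightarrow> 'a::linordered_idom"
  assumes S: "S \<subseteq> {..<n}" and w: "w \<in> carrier_vec n"
    and ker: "padded_gram S m n B *\<^sub>v w = 0\<^sub>v n"
  shows "\<And>a. a < n \<Longrightarrow> a \<notin> S \<Longrightarrow> w $ a = 0"
    and "\<And>r. r < m \<Longrightarrow> (\<Sum>b<n. B r b * w $ b) = 0"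
proof -
  have w_eq: "w = vec n (\<lambda>b. w $ b)" using w by auto
  have G_w: "(padded_gram S m n B *\<^sub>v vec n (\<lambda>b. w $ b)) $ a = 0" if "a < n" for a
    using ker that w_eq by simp
  show off_S: "w $ a = 0" if "a < n" "a \<notin> S" for a
    using G_w[OF that(1)] padded_gram_mult_vec_outside[OF that, where B = B and x = "\<lambda>b. w $ b"] by simp
  define z where "z r = (\<Sum>b<n. B r b * w $ b)" for r
  have z_orth: "(\<Sum>r<m. B r a * z r) = 0" if "a \<in> S" for a
  proof -
    have a: "a < n" using that S by auto
    show ?thesis
      using G_w[OF a] padded_gram_mult_vec_inside[OF a that, where B = B and x = "\<lambda>b. w $ b"] off_S
      by (simp add: z_def)
  qed
  have "(\<Sum>r<m. (z r)\<^sup>2) = (\<Sum>b<n. w $ b * (\<Sum>r<m. B r b * z r))"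
    by (simp add: z_def power2_eq_square sum_distrib_left sum_distrib_right mult_ac
        sum.swap[of _ "{..<m}"])
  also have "\<dots> = 0"
    using off_S z_orth by (intro sum.neutral) auto
  finally have "(\<Sum>r<m. (z r)\<^sup>2) = 0" .
  then show "(\<Sum>b<n. B r b * w $ b) = 0" if "r < m" for r
    using that sum_nonneg_eq_0_iff[of "{..<m}" "\<lambda>r. (z r)\<^sup>2"] by (simp add: z_def)
qed

text \<open>The hypothesis on \<open>det\<close> is where integrality of the Gram matrix enters.\<close>

lemma sq_norm2_le_padded_gram:
  fixes B :: "nat \<Rightarrow> nat \<Rightarrow> real"
  assumes B_le: "\<And>r j. r < m \<Longrightarrow> j < n \<Longrightarrow> \<bar>B r j\<bar> \<le> \<beta>" and \<beta>: "0 \<le> \<beta>"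
    and one_le: "1 \<le> real m * \<beta>\<^sup>2"
    and det: "1 \<le> \<bar>det (padded_gram S m n B)\<bar>"
    and supp: "\<And>b. b < n \<Longrightarrow> b \<notin> S \<Longrightarrow> x b = 0"
  shows "sq_norm2 n x \<le> real n ^ 3 * real m * (fact (n - 1) * (real m * \<beta>\<^sup>2) ^ (n - 1))\<^sup>2 * \<beta>\<^sup>2
           * (\<Sum>r<m. (\<Sum>j<n. B r j * x j)\<^sup>2)"
proof -
  define y where "y r = (\<Sum>j<n. B r j * x j)" for r
  define Y where "Y = (\<Sum>r<m. \<bar>y r\<bar>)"
  define \<alpha> where "\<alpha> = fact (n - 1) * (real m * \<beta>\<^sup>2) ^ (n - 1)"
  let ?G = "padded_gram S m n B"
  have Y: "0 \<le> Y" by (simp add: Y_def sum_nonneg)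
  have \<alpha>: "0 \<le> \<alpha>" using one_le by (simp add: \<alpha>_def)
  have Gx_le: "\<bar>(?G *\<^sub>v vec n x) $ a\<bar> \<le> \<beta> * Y" if a: "a < n" for a
  proof (cases "a \<in> S")
    case True
    have "\<bar>(?G *\<^sub>v vec n x) $ a\<bar> \<le> (\<Sum>r<m. \<bar>B r a\<bar> * \<bar>y r\<bar>)"
      using padded_gram_mult_vec_inside[OF a True supp] by (simp add: y_def abs_mult[symmetric] sum_abs)
    also have "\<dots> \<le> (\<Sum>r<m. \<beta> * \<bar>y r\<bar>)"
      using a by (intro sum_mono mult_right_mono B_le) auto
    finally show ?thesis by (simp add: Y_def sum_distrib_left)
  next
    case False
    then show ?thesis
      using padded_gram_mult_vec_outside[OF a False, where B = B and x = x] supp a \<beta> Y by simp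
  qed
  have x_le: "\<bar>x j\<bar> \<le> \<alpha> * real n * \<beta> * Y" if j: "j < n" for j
  proof -
    have "\<bar>vec n x $ j\<bar> \<le> \<alpha> * (\<Sum>a<n. \<bar>(?G *\<^sub>v vec n x) $ a\<bar>)"
      unfolding \<alpha>_def using one_le j
      by (intro abs_vec_index_le_mult_mat_vec[OF padded_gram_carrier det]
          abs_padded_gram_le[OF B_le one_le]) auto
    then have "\<bar>x j\<bar> \<le> \<alpha> * (\<Sum>a<n. \<bar>(?G *\<^sub>v vec n x) $ a\<bar>)"
      using j by simp
    also have "\<dots> \<le> \<alpha> * (\<Sum>a<n. \<beta> * Y)"
      using Gx_le \<alpha> by (intro mult_left_mono sum_mono) auto
    finally show ?thesis by (simp add: mult_ac)
  qed
  have "sq_norm2 n x \<le> (\<Sum>j<n. (\<alpha> * real n * \<beta> * Y)\<^sup>2)"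
    unfolding sq_norm2_def using power_mono[OF x_le abs_ge_zero, of _ 2] by (intro sum_mono) simp
  also have "\<dots> = real n ^ 3 * \<alpha>\<^sup>2 * \<beta>\<^sup>2 * Y\<^sup>2"
    by (simp add: power_mult_distrib power3_eq_cube power2_eq_square)
  also have "\<dots> \<le> real n ^ 3 * \<alpha>\<^sup>2 * \<beta>\<^sup>2 * (real m * (\<Sum>r<m. (y r)\<^sup>2))"
    using Cauchy_Schwarz_ineq_sum[of "\<lambda>_. 1" "\<lambda>r. \<bar>y r\<bar>" "{..<m}"]
    by (intro mult_left_mono) (auto simp: Y_def)
  finally show ?thesis by (simp add: \<alpha>_def y_def mult_ac)
qed

lemma spark_le_l0:
  assumes "in_Rn n x" "x \<noteq> (\<lambda>_. 0)" "mat_vec m n A x = (\<lambda>_. 0)"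
  shows "spark m n A \<le> enat (l0 n x)"
  unfolding spark_def using assms by (intro INF_lower) auto

lemma spark_no_rows_le_1:
  assumes "0 < n"
  shows "spark 0 n A \<le> 1"
proof -
  define e :: "nat \<Rightarrow> real" where "e j = (if j = 0 then 1 else 0)" for j
  have "{j. j < n \<and> e j \<noteq> 0} = {0}"
    using assms by (auto simp: e_def)
  then have "l0 n e = 1" by (simp add: l0_def)
  moreover have "in_Rn n e" "e \<noteq> (\<lambda>_. 0)" "mat_vec 0 n A e = (\<lambda>_. 0)"
    using assms by (auto simp: e_def in_Rn_def mat_vec_def fun_eq_iff)
  ultimately show ?thesis
    using spark_le_l0 by (metis one_enat_def)
qed

lemma det_padded_gram_nonzero:
  fixes B :: "nat \<Rightarrow> nat \<Rightarrow> int" and L :: real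
  assumes spark: "enat k < spark m n A" and L: "L \<noteq> 0"
    and B_eq: "\<And>i j. i < m \<Longrightarrow> j < n \<Longrightarrow> real_of_rat (A i j) * L = real_of_int (B i j)"
    and S: "S \<subseteq> {..<n}" "card S \<le> k"
  shows "det (padded_gram S m n B) \<noteq> 0"
proof
  assume "det (padded_gram S m n B) = 0"
  then obtain w where w: "w \<in> carrier_vec n" "w \<noteq> 0\<^sub>v n" "padded_gram S m n B *\<^sub>v w = 0\<^sub>v n"
    using det_0_iff_vec_prod_zero[OF padded_gram_carrier[of S m n B]] by auto
  note kernel = padded_gram_kernel[OF S(1) w(1,3)]
  define x where "x j = (if j < n then real_of_int (w $ j) else 0)" for j
  have "in_Rn n x" by (simp add: in_Rn_def x_def)
  moreover have "x \<noteq> (\<lambda>_. 0)"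
    using w(1,2) by (auto simp: x_def fun_eq_iff vec_eq_iff)
  moreover have "mat_vec m n A x = (\<lambda>_. 0)"
  proof
    fix r
    have term_eq: "real_of_rat (A r j) * x j = real_of_int (B r j * w $ j) / L" if "r < m" "j < n" for j
      using B_eq[OF that, symmetric] L that by (simp add: x_def)
    have "(\<Sum>j<n. real_of_rat (A r j) * x j) = (\<Sum>j<n. real_of_int (B r j * w $ j)) / L" if "r < m"
      unfolding sum_divide_distrib using term_eq[OF that] by (intro sum.cong) auto
    moreover have "(\<Sum>j<n. real_of_int (B r j * w $ j)) = 0" if "r < m"
      using arg_cong[OF kernel(2)[OF that], of real_of_int] by simp
    ultimately show "mat_vec m n A x r = 0"
      by (simp add: mat_vec_def)
  qed
  moreover have "l0 n x \<le> card S"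
    unfolding l0_def using S(1) kernel(1) by (intro card_mono) (auto simp: x_def finite_subset)
  ultimately have "spark m n A \<le> enat k"
    using spark_le_l0 S(2) by (meson enat_ord_simps(1) order_trans)
  then show False using spark by simp
qed

lemma gram_constant_le_two_power:
  fixes L :: real
  assumes "1 \<le> n" "n \<le> T" "m \<le> T" "0 \<le> L" "L \<le> 2 ^ T"
  shows "real n ^ 3 * real m * (fact (n - 1) * (real m * (4 ^ T)\<^sup>2) ^ (n - 1))\<^sup>2 * (4 ^ T)\<^sup>2 * L\<^sup>2
           \<le> 2 ^ (12 * T\<^sup>2 + 10 * T)"
proof -
  have T_le: "real T \<le> 2 ^ T"
    using less_exp[of T] by (simp flip: of_nat_le_iff)
  have n_le: "real n \<le> 2 ^ T" and m_le: "real m \<le> 2 ^ T"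
    using assms T_le by linarith+
  have four: "(4::real) ^ j = 2 ^ (2 * j)" for j by (simp add: power_mult)
  have "fact (n - 1) \<le> real (n - 1) ^ (n - 1)"
    using fact_le_power[of "n - 1", where 'a = real] by simp
  also have "\<dots> \<le> real T ^ T"
    using assms by (intro order_trans[OF power_mono power_increasing]) auto
  also have "\<dots> \<le> (2 ^ T) ^ T" using T_le by (intro power_mono) auto
  finally have fact_le: "fact (n - 1) \<le> (2::real) ^ (T * T)" by (simp add: power_mult)
  have "real m * (4 ^ T)\<^sup>2 \<le> 2 ^ T * 2 ^ (4 * T)"
    using m_le by (simp add: four power_mult[symmetric] mult_ac)
  then have "(real m * (4 ^ T)\<^sup>2) ^ (n - 1) \<le> (2 ^ (5 * T)) ^ T"
    using assms by (intro order_trans[OF power_mono power_increasing]) (auto simp: power_add[symmetric])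
  then have "fact (n - 1) * (real m * (4 ^ T)\<^sup>2) ^ (n - 1) \<le> 2 ^ (T * T) * 2 ^ (5 * T * T)"
    using fact_le by (intro mult_mono) (auto simp: power_mult)
  then have \<alpha>_le: "(fact (n - 1) * (real m * (4 ^ T)\<^sup>2) ^ (n - 1))\<^sup>2 \<le> (2 ^ (6 * T * T))\<^sup>2"
    by (intro power_mono) (auto simp: power_add[symmetric] mult.assoc)
  have "real n ^ 3 * real m * (fact (n - 1) * (real m * (4 ^ T)\<^sup>2) ^ (n - 1))\<^sup>2 * (4 ^ T)\<^sup>2 * L\<^sup>2
      \<le> (2 ^ T) ^ 3 * 2 ^ T * (2 ^ (6 * T * T))\<^sup>2 * (2 ^ (2 * T))\<^sup>2 * (2 ^ T)\<^sup>2"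
    using assms n_le m_le \<alpha>_le
    by (intro mult_mono power_mono) (auto simp: four)
  also have "\<dots> = 2 ^ (12 * T\<^sup>2 + 10 * T)"
    by (simp only: power_mult[symmetric] power_add[symmetric]) (simp add: power2_eq_square algebra_simps)
  finally show ?thesis .
qed

lemma sq_norm2_le_two_power_mat_size:
  fixes A :: "nat \<Rightarrow> nat \<Rightarrow> rat"
  assumes k: "0 < k" "k \<le> n" and spark: "enat k < spark m n A"
    and x: "in_Rn n x" "l0 n x \<le> k"
  shows "sq_norm2 n x \<le> 2 ^ (12 * (mat_size m n A)\<^sup>2 + 10 * mat_size m n A) * sq_norm2 m (mat_vec m n A x)"
proof -
  define T where "T = mat_size m n A"
  obtain L :: int and B :: "nat \<Rightarrow> nat \<Rightarrow> int" where L: "L \<ge> 1" "real_of_int L \<le> 2 ^ T"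
    and B_eq: "\<And>i j. i < m \<Longrightarrow> j < n \<Longrightarrow> real_of_rat (A i j) * real_of_int L = real_of_int (B i j)"
    and B_le: "\<And>i j. i < m \<Longrightarrow> j < n \<Longrightarrow> real_of_int \<bar>B i j\<bar> \<le> 4 ^ T"
    using common_denominator_mat[of m n A] unfolding T_def by metis
  have "m \<noteq> 0"
  proof
    assume "m = 0"
    then have "spark m n A \<le> enat k"
      using spark_no_rows_le_1[of n A] k by (simp add: one_enat_def order_trans)
    then show False using spark by simp
  qed
  then have "m \<le> m * n" "n \<le> m * n" using k by simp_all
  moreover have "m * n \<le> T" by (simp add: T_def mat_size_def)
  ultimately have mn_le: "m \<le> T" "n \<le> T" by linarith+
  define S where "S = {j. j < n \<and> x j \<noteq> 0}"
  have S: "S \<subseteq> {..<n}" "card S \<le> k" using x(2) by (auto simp: S_def l0_def)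
  let ?B = "\<lambda>r j. real_of_int (B r j)"
  have "det (padded_gram S m n B) \<noteq> 0"
    using det_padded_gram_nonzero[OF spark _ B_eq S] L by simp
  then have "1 \<le> \<bar>det (padded_gram S m n B)\<bar>" by linarith
  moreover have "det (padded_gram S m n ?B) = of_int (det (padded_gram S m n B))"
    by (simp flip: map_mat_of_int_padded_gram add: of_int_hom.hom_det)
  ultimately have det: "1 \<le> \<bar>det (padded_gram S m n ?B)\<bar>"
    by (metis of_int_1_le_iff of_int_abs)
  have Ax: "(\<Sum>j<n. ?B r j * x j) = real_of_int L * mat_vec m n A x r" if "r < m" for r
  proof -
    have "(\<Sum>j<n. ?B r j * x j) = (\<Sum>j<n. real_of_int L * (real_of_rat (A r j) * x j))"
      using that by (intro sum.cong) (auto simp flip: B_eq)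
    then show ?thesis using that by (simp add: mat_vec_def sum_distrib_left)
  qed
  have image_eq: "(\<Sum>r<m. (\<Sum>j<n. ?B r j * x j)\<^sup>2) = (real_of_int L)\<^sup>2 * sq_norm2 m (mat_vec m n A x)"
    unfolding sq_norm2_def sum_distrib_left by (intro sum.cong) (simp_all add: Ax power_mult_distrib)
  have "sq_norm2 n x \<le> real n ^ 3 * real m * (fact (n - 1) * (real m * (4 ^ T)\<^sup>2) ^ (n - 1))\<^sup>2
      * (4 ^ T)\<^sup>2 * (\<Sum>r<m. (\<Sum>j<n. ?B r j * x j)\<^sup>2)"
    using mult_mono[of 1 "real m" 1 "(4 ^ T)\<^sup>2"] \<open>m \<noteq> 0\<close> B_le det
    by (intro sq_norm2_le_padded_gram) (auto simp: S_def)
  also have "\<dots> = real n ^ 3 * real m * (fact (n - 1) * (real m * (4 ^ T)\<^sup>2) ^ (n - 1))\<^sup>2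
      * (4 ^ T)\<^sup>2 * (real_of_int L)\<^sup>2 * sq_norm2 m (mat_vec m n A x)"
    by (simp add: image_eq mult.assoc)
  also have "\<dots> \<le> 2 ^ (12 * T\<^sup>2 + 10 * T) * sq_norm2 m (mat_vec m n A x)"
    using k mn_le L by (intro mult_right_mono gram_constant_le_two_power) (auto simp: sq_norm2_def sum_nonneg)
  finally show ?thesis unfolding T_def .
qed

theorem lemma5:
  "\<exists>c d :: nat. \<forall>m n (A :: nat \<Rightarrow> nat \<Rightarrow> rat) k.
     0 < k \<and> k \<le> n \<and> spark m n A > enat k \<longrightarrow>
     (\<exists>\<epsilon> :: rat. \<epsilon> > 0 \<and> rat_size \<epsilon> \<le> c * (mat_size m n A + 1) ^ d \<and>
        (\<forall>x. in_Rn n x \<and> l0 n x \<le> k \<longrightarrow>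
           sq_norm2 m (mat_vec m n A x) \<ge> real_of_rat \<epsilon> * sq_norm2 n x))"
proof (rule exI[of _ 25], rule exI[of _ 2], intro allI impI)
  fix m n k and A :: "nat \<Rightarrow> nat \<Rightarrow> rat"
  assume h: "0 < k \<and> k \<le> n \<and> spark m n A > enat k"
  define T where "T = mat_size m n A"
  define N where "N = 12 * T\<^sup>2 + 10 * T"
  define \<epsilon> :: rat where "\<epsilon> = 1 / of_int (2 ^ N)"
  have "rat_size \<epsilon> \<le> N + 3" unfolding \<epsilon>_def by (rule rat_size_inverse_two_power)
  also have "\<dots> \<le> 25 * (T + 1) ^ 2" by (simp add: N_def power2_eq_square algebra_simps)
  finally have size: "rat_size \<epsilon> \<le> 25 * (mat_size m n A + 1) ^ 2" by (simp add: T_def)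
  have "real_of_rat \<epsilon> * sq_norm2 n x \<le> sq_norm2 m (mat_vec m n A x)"
    if "in_Rn n x \<and> l0 n x \<le> k" for x
    using sq_norm2_le_two_power_mat_size[of k n m A x] h that
    by (simp add: \<epsilon>_def N_def T_def of_rat_divide of_rat_power field_simps)
  then show "\<exists>\<epsilon> :: rat. \<epsilon> > 0 \<and> rat_size \<epsilon> \<le> 25 * (mat_size m n A + 1) ^ 2 \<and>
      (\<forall>x. in_Rn n x \<and> l0 n x \<le> k \<longrightarrow> sq_norm2 m (mat_vec m n A x) \<ge> real_of_rat \<epsilon> * sq_norm2 n x)"
    using size by (intro exI[of _ \<epsilon>]) (auto simp: \<epsilon>_def)
qed

end
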